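(* For the Chern connection $\nabla_E$ of a finitely generated projective holomorphic left module $E$ with non-degenerate hermitian metric (as in the context), the components of its curvature $R_E=({\rm d}\otimes\mathrm{id}-\mathrm{id}\wedge\nabla_E)\nabla_E:E\to\Omega^2\otimes_AE$ in $\Omega^{0,2}\otimes_AE$ and in $\Omega^{2,0}\otimes_AE$ vanish.
   Context: $A$ is a $*$-algebra with $*$-calculus and integrable almost complex structure ($\Omega^n=\oplus_{p+q=n}\Omega^{p,q}$, ${\rm d}=\partial+\overline\partial$, $\partial^2=\overline\partial^2=0$, $\wedge$ respecting bidegree, $*$ exchanging $\Omega^{1,0},\Omega^{0,1}$). $E$ is a left $A$-module, finitely generated projective, with holomorphic structure $\overline\partial_E:E\to\Omega^{0,1}\otimes_AE$ ($\overline\partial_E(a.e)=\overline\partial a\otimes e+a.\overline\partial_Ee$, and $(\overline\partial\otimes\mathrm{id}-\mathrm{id}\wedge\overline\partial_E)\overline\partial_E=0$), and $\langle,\rangle:E\otimes_A\overline E\to A$ is a non-degenerate hermitian inner product (bimodule map with $\langle e,\overline f\rangle^*=\langle f,\overline e\rangle$, induced by a bimodule isomorphism $\overline E\to{}_A{\rm Hom}(E,A)$). The Chern connection is the unique left connection $\nabla_E:E\to\Omega^1\otimes_AE$ that preserves the metric (${\rm d}\langle e,\overline f\rangle=(\mathrm{id}\otimes\langle,\rangle)(\nabla_Ee\otimes\overline f)+(\langle,\rangle\otimes\mathrm{id})(e\otimes\tilde\nabla\overline f)$, $\tilde\nabla(\overline f)=\overline g\otimes\kappa^*$ when $\nabla_Ef=\kappa\otimes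 g$) and satisfies $(\pi^{0,1}\otimes\mathrm{id})\nabla_E=\overline\partial_E$. *)

theory Defs
  imports Complex_Main "HOL-Library.Poly_Mapping"
begin

section \<open>Formal sums and tensor products over A\<close>

definition zscale :: "int \<Rightarrow> 'g::ab_group_add \<Rightarrow> 'g" where
  "zscale n g = (if 0 \<le> n then (\<Sum>i<nat n. g) else - (\<Sum>i<nat (- n). g))"

definition lin :: "('k \<Rightarrow> 'g::ab_group_add) \<Rightarrow> ('k \<Rightarrow>\<^sub>0 int) \<Rightarrow> 'g" where
  "lin f x = (\<Sum>k\<in>Poly_Mapping.keys x. zscale (Poly_Mapping.lookup x k) (f k))"

text \<open>The pure tensor w (x) e, as a generator of the free abelian group on W x E.\<close>
definition tn :: "'w \<Rightarrow> 'e \<Rightarrow> ('w \<times> 'e \<Rightarrow>\<^sub>0 int)" where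
  "tn w e = Poly_Mapping.single (w, e) 1"

text \<open>The subgroup of relations defining the tensor product W (x)_A E of a right
  A-module W (right action ract) and a left A-module E (left action act).
  W (x)_A E is the free abelian group on W x E modulo this subgroup.\<close>
inductive_set tens_null ::
  "('w::ab_group_add \<Rightarrow> 'a \<Rightarrow> 'w) \<Rightarrow> ('a \<Rightarrow> 'e::ab_group_add \<Rightarrow> 'e) \<Rightarrow> ('w \<times> 'e \<Rightarrow>\<^sub>0 int) set"
  for ract act where
  zero: "0 \<in> tens_null ract act"
| add: "x \<in> tens_null ract act \<Longrightarrow> y \<in> tens_null ract act \<Longrightarrow> x + y \<in> tens_null ract act"
| neg: "x \<in> tens_null ract act \<Longrightarrow> - x \<in> tens_null ract act"
| addl: "tn (w + w') e - tn w e - tn w' e \<in> tens_null ract act"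
| addr: "tn w (e + e') - tn w e - tn w e' \<in> tens_null ract act"
| bal: "tn (ract w a) e - tn w (act a e) \<in> tens_null ract act"

text \<open>Equality of the represented elements of W (x)_A E.\<close>
definition teq ::
  "('w::ab_group_add \<Rightarrow> 'a \<Rightarrow> 'w) \<Rightarrow> ('a \<Rightarrow> 'e::ab_group_add \<Rightarrow> 'e)
    \<Rightarrow> ('w \<times> 'e \<Rightarrow>\<^sub>0 int) \<Rightarrow> ('w \<times> 'e \<Rightarrow>\<^sub>0 int) \<Rightarrow> bool" where
  "teq ract act x y \<longleftrightarrow> x - y \<in> tens_null ract act"

text \<open>f (x) id on representatives.\<close>
definition tmap :: "('w \<Rightarrow> 'v) \<Rightarrow> ('w \<times> 'e \<Rightarrow>\<^sub>0 int) \<Rightarrow> ('v \<times> 'e \<Rightarrow>\<^sub>0 int)" where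
  "tmap f x = lin (\<lambda>(w, e). tn (f w) e) x"

section \<open>Star differential calculus (degrees 0,1,2) with almost complex structure\<close>

record ('a, 'w1, 'w2) calc =
  starA :: "'a \<Rightarrow> 'a"
  cpx :: "complex \<Rightarrow> 'a"        \<comment> \<open>the scalars C inside A\<close>
  lact1 :: "'a \<Rightarrow> 'w1 \<Rightarrow> 'w1"
  ract1 :: "'w1 \<Rightarrow> 'a \<Rightarrow> 'w1"
  lact2 :: "'a \<Rightarrow> 'w2 \<Rightarrow> 'w2"
  ract2 :: "'w2 \<Rightarrow> 'a \<Rightarrow> 'w2"
  d0 :: "'a \<Rightarrow> 'w1"
  d1 :: "'w1 \<Rightarrow> 'w2"
  wedge :: "'w1 \<Rightarrow> 'w1 \<Rightarrow> 'w2"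
  star1 :: "'w1 \<Rightarrow> 'w1"
  star2 :: "'w2 \<Rightarrow> 'w2"
  p10 :: "'w1 \<Rightarrow> 'w1"
  p01 :: "'w1 \<Rightarrow> 'w1"
  p20 :: "'w2 \<Rightarrow> 'w2"
  p11 :: "'w2 \<Rightarrow> 'w2"
  p02 :: "'w2 \<Rightarrow> 'w2"

definition bimod :: "('a::ring_1 \<Rightarrow> 'w::ab_group_add \<Rightarrow> 'w) \<Rightarrow> ('w \<Rightarrow> 'a \<Rightarrow> 'w) \<Rightarrow> bool" where
  "bimod l r \<longleftrightarrow>
     (\<forall>w. l 1 w = w) \<and> (\<forall>a b w. l (a * b) w = l a (l b w)) \<and>
     (\<forall>a b w. l (a + b) w = l a w + l b w) \<and> (\<forall>a w w'. l a (w + w') = l a w + l a w') \<and>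
     (\<forall>w. r w 1 = w) \<and> (\<forall>a b w. r w (a * b) = r (r w a) b) \<and>
     (\<forall>a b w. r w (a + b) = r w a + r w b) \<and> (\<forall>a w w'. r (w + w') a = r w a + r w' a) \<and>
     (\<forall>a b w. l a (r w b) = r (l a w) b)"

definition bimod_map ::
  "('a \<Rightarrow> 'w::ab_group_add \<Rightarrow> 'w) \<Rightarrow> ('w \<Rightarrow> 'a \<Rightarrow> 'w) \<Rightarrow> ('w \<Rightarrow> 'w) \<Rightarrow> bool" where
  "bimod_map l r p \<longleftrightarrow> (\<forall>w w'. p (w + w') = p w + p w') \<and>
     (\<forall>a w. p (l a w) = l a (p w)) \<and> (\<forall>a w. p (r w a) = r (p w) a)"

text \<open>A *-algebra over C with a *-differential calculus, truncated at degree 2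
  (only degrees <= 2 enter the statement), generated in the usual sense by A and dA.\<close>
definition star_calculus :: "('a::ring_1, 'w1::ab_group_add, 'w2::ab_group_add) calc \<Rightarrow> bool" where
  "star_calculus C \<longleftrightarrow>
     \<comment> \<open>C is a central unital subring of A; A is a *-algebra over C\<close>
     (\<forall>c c'. cpx C (c + c') = cpx C c + cpx C c') \<and> (\<forall>c c'. cpx C (c * c') = cpx C c * cpx C c') \<and>
     cpx C 1 = 1 \<and> (\<forall>c a. cpx C c * a = a * cpx C c) \<and>
     (\<forall>a b. starA C (a + b) = starA C a + starA C b) \<and> (\<forall>a b. starA C (a * b) = starA C b * starA C a) \<and>
     (\<forall>a. starA C (starA C a) = a) \<and> (\<forall>c. starA C (cpx C c) = cpx C (cnj c)) \<and>
     \<comment> \<open>Omega^1, Omega^2 are A-bimodules, C-bilinear\<close>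
     bimod (lact1 C) (ract1 C) \<and> bimod (lact2 C) (ract2 C) \<and>
     (\<forall>c w. lact1 C (cpx C c) w = ract1 C w (cpx C c)) \<and>
     (\<forall>c w. lact2 C (cpx C c) w = ract2 C w (cpx C c)) \<and>
     \<comment> \<open>wedge product: biadditive and associative with the module actions\<close>
     (\<forall>x y z. wedge C (x + y) z = wedge C x z + wedge C y z) \<and>
     (\<forall>x y z. wedge C x (y + z) = wedge C x y + wedge C x z) \<and>
     (\<forall>a x y. wedge C (lact1 C a x) y = lact2 C a (wedge C x y)) \<and>
     (\<forall>a x y. wedge C (ract1 C x a) y = wedge C x (lact1 C a y)) \<and>
     (\<forall>a x y. wedge C x (ract1 C y a) = ract2 C (wedge C x y) a) \<and>
     \<comment> \<open>exterior derivative: C-linear, graded Leibniz, d^2 = 0\<close>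
     (\<forall>a b. d0 C (a + b) = d0 C a + d0 C b) \<and>
     (\<forall>a b. d0 C (a * b) = ract1 C (d0 C a) b + lact1 C a (d0 C b)) \<and>
     (\<forall>c a. d0 C (cpx C c * a) = lact1 C (cpx C c) (d0 C a)) \<and>
     (\<forall>x y. d1 C (x + y) = d1 C x + d1 C y) \<and>
     (\<forall>a x. d1 C (lact1 C a x) = wedge C (d0 C a) x + lact2 C a (d1 C x)) \<and>
     (\<forall>a x. d1 C (ract1 C x a) = ract2 C (d1 C x) a - wedge C x (d0 C a)) \<and>
     (\<forall>c x. d1 C (lact1 C (cpx C c) x) = lact2 C (cpx C c) (d1 C x)) \<and>
     (\<forall>a. d1 C (d0 C a) = 0) \<and>
     \<comment> \<open>generation: Omega^1 = A dA, Omega^2 = Omega^1 wedge Omega^1\<close>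
     (\<forall>x. \<exists>l :: ('a \<times> 'a) list. x = (\<Sum>(a, b)\<leftarrow>l. lact1 C a (d0 C b))) \<and>
     (\<forall>w. \<exists>l :: ('w1 \<times> 'w1) list. w = (\<Sum>(x, y)\<leftarrow>l. wedge C x y)) \<and>
     \<comment> \<open>star operation on forms\<close>
     (\<forall>x y. star1 C (x + y) = star1 C x + star1 C y) \<and> (\<forall>x. star1 C (star1 C x) = x) \<and>
     (\<forall>a x. star1 C (lact1 C a x) = ract1 C (star1 C x) (starA C a)) \<and>
     (\<forall>a x. star1 C (ract1 C x a) = lact1 C (starA C a) (star1 C x)) \<and>
     (\<forall>x y. star2 C (x + y) = star2 C x + star2 C y) \<and> (\<forall>x. star2 C (star2 C x) = x) \<and>
     (\<forall>a x. star2 C (lact2 C a x) = ract2 C (star2 C x) (starA C a)) \<and>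
     (\<forall>a x. star2 C (ract2 C x a) = lact2 C (starA C a) (star2 C x)) \<and>
     (\<forall>x y. star2 C (wedge C x y) = - wedge C (star1 C y) (star1 C x)) \<and>
     (\<forall>a. d0 C (starA C a) = star1 C (d0 C a)) \<and>
     (\<forall>x. d1 C (star1 C x) = star2 C (d1 C x))"

text \<open>Almost complex structure: bimodule decompositions Omega^1 = Omega^{1,0} + Omega^{0,1},
  Omega^2 = Omega^{2,0} + Omega^{1,1} + Omega^{0,2} (given by the projections),
  wedge respects bidegree, star exchanges (p,q) and (q,p).\<close>
definition almost_complex :: "('a::ring_1, 'w1::ab_group_add, 'w2::ab_group_add) calc \<Rightarrow> bool" where
  "almost_complex C \<longleftrightarrow>
     bimod_map (lact1 C) (ract1 C) (p10 C) \<and> bimod_map (lact1 C) (ract1 C) (p01 C) \<and>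
     (\<forall>x. p10 C x + p01 C x = x) \<and>
     (\<forall>x. p10 C (p10 C x) = p10 C x) \<and> (\<forall>x. p01 C (p01 C x) = p01 C x) \<and>
     (\<forall>x. p10 C (p01 C x) = 0) \<and> (\<forall>x. p01 C (p10 C x) = 0) \<and>
     bimod_map (lact2 C) (ract2 C) (p20 C) \<and> bimod_map (lact2 C) (ract2 C) (p11 C) \<and>
     bimod_map (lact2 C) (ract2 C) (p02 C) \<and>
     (\<forall>w. p20 C w + p11 C w + p02 C w = w) \<and>
     (\<forall>w. p20 C (p20 C w) = p20 C w) \<and> (\<forall>w. p11 C (p11 C w) = p11 C w) \<and>
     (\<forall>w. p02 C (p02 C w) = p02 C w) \<and>
     (\<forall>w. p20 C (p11 C w) = 0) \<and> (\<forall>w. p20 C (p02 C w) = 0) \<and>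
     (\<forall>w. p11 C (p20 C w) = 0) \<and> (\<forall>w. p11 C (p02 C w) = 0) \<and>
     (\<forall>w. p02 C (p20 C w) = 0) \<and> (\<forall>w. p02 C (p11 C w) = 0) \<and>
     (\<forall>x y. p20 C (wedge C (p10 C x) (p10 C y)) = wedge C (p10 C x) (p10 C y)) \<and>
     (\<forall>x y. p11 C (wedge C (p10 C x) (p01 C y)) = wedge C (p10 C x) (p01 C y)) \<and>
     (\<forall>x y. p11 C (wedge C (p01 C x) (p10 C y)) = wedge C (p01 C x) (p10 C y)) \<and>
     (\<forall>x y. p02 C (wedge C (p01 C x) (p01 C y)) = wedge C (p01 C x) (p01 C y)) \<and>
     (\<forall>x. star1 C (p10 C x) = p01 C (star1 C x)) \<and>
     (\<forall>x. star1 C (p01 C x) = p10 C (star1 C x)) \<and>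
     (\<forall>w. star2 C (p20 C w) = p02 C (star2 C w)) \<and>
     (\<forall>w. star2 C (p11 C w) = p11 C (star2 C w)) \<and>
     (\<forall>w. star2 C (p02 C w) = p20 C (star2 C w))"

definition del0 :: "('a, 'w1, 'w2) calc \<Rightarrow> 'a \<Rightarrow> 'w1" where
  "del0 C a = p10 C (d0 C a)"
definition dbar0 :: "('a, 'w1, 'w2) calc \<Rightarrow> 'a \<Rightarrow> 'w1" where
  "dbar0 C a = p01 C (d0 C a)"
definition del1 :: "('a, 'w1, 'w2::ab_group_add) calc \<Rightarrow> 'w1 \<Rightarrow> 'w2" where
  "del1 C x = p20 C (d1 C (p10 C x)) + p11 C (d1 C (p01 C x))"
definition dbar1 :: "('a, 'w1, 'w2::ab_group_add) calc \<Rightarrow> 'w1 \<Rightarrow> 'w2" where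
  "dbar1 C x = p11 C (d1 C (p10 C x)) + p02 C (d1 C (p01 C x))"

text \<open>Integrability: d = del + delbar (no (p+2,q-1) or (p-1,q+2) components), del^2 = delbar^2 = 0.\<close>
definition integrable :: "('a::ring_1, 'w1::ab_group_add, 'w2::ab_group_add) calc \<Rightarrow> bool" where
  "integrable C \<longleftrightarrow>
     (\<forall>x. p02 C (d1 C (p10 C x)) = 0) \<and> (\<forall>x. p20 C (d1 C (p01 C x)) = 0) \<and>
     (\<forall>a. del1 C (del0 C a) = 0) \<and> (\<forall>a. dbar1 C (dbar0 C a) = 0)"

definition ac_star_calculus :: "('a::ring_1, 'w1::ab_group_add, 'w2::ab_group_add) calc \<Rightarrow> bool" where
  "ac_star_calculus C \<longleftrightarrow> star_calculus C \<and> almost_complex C \<and> integrable C"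

section \<open>Modules, holomorphic structures, metrics, connections\<close>

definition left_module :: "('a::ring_1 \<Rightarrow> 'e::ab_group_add \<Rightarrow> 'e) \<Rightarrow> bool" where
  "left_module act \<longleftrightarrow> (\<forall>e. act 1 e = e) \<and> (\<forall>a b e. act (a * b) e = act a (act b e)) \<and>
     (\<forall>a b e. act (a + b) e = act a e + act b e) \<and> (\<forall>a e f. act a (e + f) = act a e + act a f)"

text \<open>Finitely generated projective: a direct summand of a free module A^n
  (A^n represented as functions nat => A vanishing from n on).\<close>
definition fg_projective :: "('a::ring_1 \<Rightarrow> 'e::ab_group_add \<Rightarrow> 'e) \<Rightarrow> bool" where
  "fg_projective act \<longleftrightarrow>
     (\<exists>(n::nat) (\<iota>::'e \<Rightarrow> nat \<Rightarrow> 'a) (\<pi>::(nat \<Rightarrow> 'a) \<Rightarrow> 'e).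
        (\<forall>e i. n \<le> i \<longrightarrow> \<iota> e i = 0) \<and>
        (\<forall>e f. \<iota> (e + f) = (\<lambda>i. \<iota> e i + \<iota> f i)) \<and>
        (\<forall>a e. \<iota> (act a e) = (\<lambda>i. a * \<iota> e i)) \<and>
        (\<forall>v w. (\<forall>i\<ge>n. v i = 0) \<longrightarrow> (\<forall>i\<ge>n. w i = 0) \<longrightarrow> \<pi> (\<lambda>i. v i + w i) = \<pi> v + \<pi> w) \<and>
        (\<forall>a v. (\<forall>i\<ge>n. v i = 0) \<longrightarrow> \<pi> (\<lambda>i. a * v i) = act a (\<pi> v)) \<and>
        (\<forall>e. \<pi> (\<iota> e) = e))"

definition tlact :: "('a, 'w1, 'w2) calc \<Rightarrow> 'a \<Rightarrow> ('w1 \<times> 'e \<Rightarrow>\<^sub>0 int) \<Rightarrow> ('w1 \<times> 'e \<Rightarrow>\<^sub>0 int)" where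
  "tlact C a x = tmap (lact1 C a) x"
definition twedge :: "('a, 'w1, 'w2) calc \<Rightarrow> 'w1 \<Rightarrow> ('w1 \<times> 'e \<Rightarrow>\<^sub>0 int) \<Rightarrow> ('w2 \<times> 'e \<Rightarrow>\<^sub>0 int)" where
  "twedge C x y = tmap (wedge C x) y"

text \<open>Elements of Omega^{0,1} (x)_A E are
  represented by formal sums with first entries in Omega^{0,1}; since Omega^{0,1} is a bimodule
  direct summand of Omega^1, equalities there may be tested in Omega^1 (x)_A E, resp. Omega^2 (x)_A E.\<close>
definition holomorphic_structure ::
  "('a::ring_1, 'w1::ab_group_add, 'w2::ab_group_add) calc \<Rightarrow> ('a \<Rightarrow> 'e::ab_group_add \<Rightarrow> 'e)
    \<Rightarrow> ('e \<Rightarrow> ('w1 \<times> 'e \<Rightarrow>\<^sub>0 int)) \<Rightarrow> bool" where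
  "holomorphic_structure C act dbE \<longleftrightarrow>
     (\<forall>e. \<forall>k\<in>Poly_Mapping.keys (dbE e). p01 C (fst k) = fst k) \<and>
     (\<forall>e f. teq (ract1 C) act (dbE (e + f)) (dbE e + dbE f)) \<and>
     (\<forall>a e. teq (ract1 C) act (dbE (act a e)) (tn (dbar0 C a) e + tlact C a (dbE e))) \<and>
     (\<forall>e. teq (ract2 C) act
            (lin (\<lambda>(x, f). tn (dbar1 C x) f - twedge C x (dbE f)) (dbE e)) 0)"

text \<open>Non-degenerate hermitian inner product (as a map on E x Ebar, with the bimodule-map property
  written out), non-degeneracy: fbar |-> <-, fbar> is a bijection onto Hom_A(E, A).\<close>
definition nondeg_hermitian ::
  "('a::ring_1, 'w1, 'w2) calc \<Rightarrow> ('a \<Rightarrow> 'e::ab_group_add \<Rightarrow> 'e) \<Rightarrow> ('e \<Rightarrow> 'e \<Rightarrow> 'a) \<Rightarrow> bool" where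
  "nondeg_hermitian C act h \<longleftrightarrow>
     (\<forall>e e' f. h (e + e') f = h e f + h e' f) \<and> (\<forall>e f f'. h e (f + f') = h e f + h e f') \<and>
     (\<forall>a e f. h (act a e) f = a * h e f) \<and> (\<forall>a e f. h e (act a f) = h e f * starA C a) \<and>
     (\<forall>e f. starA C (h e f) = h f e) \<and>
     (\<forall>\<phi>::'e \<Rightarrow> 'a. (\<forall>e e'. \<phi> (e + e') = \<phi> e + \<phi> e') \<and> (\<forall>a e. \<phi> (act a e) = a * \<phi> e)
         \<longrightarrow> (\<exists>!f. \<forall>e. \<phi> e = h e f))"

definition left_connection ::
  "('a::ring_1, 'w1::ab_group_add, 'w2) calc \<Rightarrow> ('a \<Rightarrow> 'e::ab_group_add \<Rightarrow> 'e)
    \<Rightarrow> ('e \<Rightarrow> ('w1 \<times> 'e \<Rightarrow>\<^sub>0 int)) \<Rightarrow> bool" where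
  "left_connection C act nab \<longleftrightarrow>
     (\<forall>e f. teq (ract1 C) act (nab (e + f)) (nab e + nab f)) \<and>
     (\<forall>a e. teq (ract1 C) act (nab (act a e)) (tn (d0 C a) e + tlact C a (nab e)))"

definition preserves_metric ::
  "('a::ring_1, 'w1::ab_group_add, 'w2) calc \<Rightarrow> ('e \<Rightarrow> 'e \<Rightarrow> 'a)
    \<Rightarrow> ('e \<Rightarrow> ('w1 \<times> 'e \<Rightarrow>\<^sub>0 int)) \<Rightarrow> bool" where
  "preserves_metric C h nab \<longleftrightarrow>
     (\<forall>e f. d0 C (h e f) =
        lin (\<lambda>(x, g). ract1 C x (h g f)) (nab e) + lin (\<lambda>(x, g). lact1 C (h e g) (star1 C x)) (nab f))"

definition chern_connection ::
  "('a::ring_1, 'w1::ab_group_add, 'w2) calc \<Rightarrow> ('a \<Rightarrow> 'e::ab_group_add \<Rightarrow> 'e) \<Rightarrow> ('e \<Rightarrow> 'e \<Rightarrow> 'a)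
    \<Rightarrow> ('e \<Rightarrow> ('w1 \<times> 'e \<Rightarrow>\<^sub>0 int)) \<Rightarrow> ('e \<Rightarrow> ('w1 \<times> 'e \<Rightarrow>\<^sub>0 int)) \<Rightarrow> bool" where
  "chern_connection C act h dbE nab \<longleftrightarrow>
     left_connection C act nab \<and> preserves_metric C h nab \<and>
     (\<forall>e. teq (ract1 C) act (tmap (p01 C) (nab e)) (dbE e))"

definition curvature ::
  "('a, 'w1, 'w2::ab_group_add) calc \<Rightarrow> ('e \<Rightarrow> ('w1 \<times> 'e \<Rightarrow>\<^sub>0 int)) \<Rightarrow> 'e \<Rightarrow> ('w2 \<times> 'e \<Rightarrow>\<^sub>0 int)" where
  "curvature C nab e = lin (\<lambda>(x, f). tn (d1 C x) f - twedge C x (nab f)) (nab e)"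

end

theory Submission
  imports Defs
begin

text \<open>Contracting with the metric turns \<open>\<omega> \<in> \<Omega>\<^sup>2 \<otimes>\<^sub>A E\<close> into the family of 2-forms
  \<open>\<langle>\<omega>, f\<rangle>\<close>, \<open>f \<in> E\<close>, and for a finitely generated projective module with non-degenerate
  metric this family determines \<open>\<omega>\<close> (dual basis lemma).  The \<open>(0,2)\<close>-part of \<open>\<langle>R\<^sub>E e, f\<rangle>\<close>
  only sees the \<open>(0,1)\<close>-part of \<open>\<nabla>\<^sub>E\<close>, which is the holomorphic structure, so it is the
  contraction of its vanishing square.  Metric compatibility gives
  \<open>\<langle>R\<^sub>E e, f\<rangle> = - \<langle>R\<^sub>E f, e\<rangle>\<^sup>*\<close>, and \<open>*\<close> exchanges the \<open>(2,0)\<close>- and \<open>(0,2)\<close>-parts, so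
  the \<open>(2,0)\<close>-part vanishes as well.\<close>

lemma zscale_0 [simp]: "zscale 0 g = 0"
  by (simp add: zscale_def)

lemma zscale_plus_1: "zscale (n + 1) g = zscale n g + g"
proof (cases "0 \<le> n")
  case True
  then have "nat (n + 1) = Suc (nat n)" by simp
  with True show ?thesis by (simp add: zscale_def)
next
  case False
  then have "nat (- n) = Suc (nat (- (n + 1)))" by simp
  with False show ?thesis
    by (cases "n = -1") (simp_all add: zscale_def)
qed

lemma zscale_minus_1: "zscale (n - 1) g = zscale n g - g"
  using zscale_plus_1[of "n - 1" g] by (simp add: algebra_simps)

lemma zscale_add: "zscale (m + n) g = zscale m g + zscale n g"
proof (induction n rule: int_induct[where k = 0])
  case base
  show ?case by simp
next
  case (step1 i)
  then show ?case by (metis add.assoc zscale_plus_1)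
next
  case (step2 i)
  then show ?case by (metis add_diff_eq zscale_minus_1)
qed

lemma additive_zscale_commute:
  assumes "additive T"
  shows "T (zscale n g) = zscale n (T g)"
proof -
  interpret additive T by fact
  show ?thesis
    by (induction n rule: int_induct[where k = 0])
      (simp_all add: zero zscale_plus_1 zscale_minus_1 add diff)
qed

lemma additive_zscale: "additive (zscale n)"
proof
  show "zscale n (a + b) = zscale n a + zscale n b" for a b :: 'a
    by (induction n rule: int_induct[where k = 0])
      (simp_all add: zscale_plus_1 zscale_minus_1 algebra_simps)
qed

lemma zscale_0_right [simp]: "zscale n 0 = 0"
  by (rule additive.zero[OF additive_zscale])

lemma zscale_1 [simp]: "zscale 1 g = g"
  using zscale_plus_1[of 0 g] by simp

lemma zscale_commute: "zscale m (zscale n g) = zscale n (zscale m g)"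
  by (rule additive_zscale_commute[OF additive_zscale])

lemma zscale_int_1: "zscale n (1::int) = n"
  by (induction n rule: int_induct[where k = 0])
    (simp_all add: zscale_plus_1 zscale_minus_1)


lemma lin_superset:
  assumes "finite S" "Poly_Mapping.keys x \<subseteq> S"
  shows "lin f x = (\<Sum>k\<in>S. zscale (Poly_Mapping.lookup x k) (f k))"
  unfolding lin_def
  by (rule sum.mono_neutral_left) (use assms in \<open>auto simp: in_keys_iff\<close>)

lemma additive_lin: "additive (lin (f :: 'k \<Rightarrow> 'g::ab_group_add))"
proof
  fix x y :: "'k \<Rightarrow>\<^sub>0 int"
  let ?S = "Poly_Mapping.keys x \<union> Poly_Mapping.keys y"
  have "lin f (x + y) = (\<Sum>k\<in>?S. zscale (Poly_Mapping.lookup (x + y) k) (f k))"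
    by (rule lin_superset) (use keys_add[of x y] in auto)
  also have "\<dots> = (\<Sum>k\<in>?S. zscale (Poly_Mapping.lookup x k) (f k))
      + (\<Sum>k\<in>?S. zscale (Poly_Mapping.lookup y k) (f k))"
    by (simp add: lookup_add zscale_add sum.distrib)
  also have "\<dots> = lin f x + lin f y"
    by (simp add: lin_superset[symmetric])
  finally show "lin f (x + y) = lin f x + lin f y" .
qed

interpretation lin: additive "lin f" for f
  by (rule additive_lin)

lemma lin_tn [simp]: "lin f (tn w e) = f (w, e)"
  by (simp add: lin_def tn_def)

lemma lin_cong: "(\<And>k. k \<in> Poly_Mapping.keys x \<Longrightarrow> f k = g k) \<Longrightarrow> lin f x = lin g x"
  unfolding lin_def by simp

lemma additive_lin_commute:
  assumes "additive T"
  shows "T (lin f x) = lin (\<lambda>k. T (f k)) x"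
  unfolding lin_def
  by (simp add: additive.sum[OF assms] additive_zscale_commute[OF assms])

lemma lin_add_fun: "lin (\<lambda>k. f k + g k) x = lin f x + lin g x"
  unfolding lin_def by (simp add: additive.add[OF additive_zscale] sum.distrib)

lemma lin_minus_fun: "lin (\<lambda>k. - f k) x = - lin f x"
  unfolding lin_def by (simp add: additive.minus[OF additive_zscale] sum_negf)

lemma lin_sum_fun: "lin (\<lambda>k. \<Sum>i\<in>S. F i k) x = (\<Sum>i\<in>S. lin (F i) x)"
  by (induction S rule: infinite_finite_induct)
    (simp_all add: lin_add_fun lin_def)

lemma lin_swap: "lin (\<lambda>k. lin (\<lambda>j. F k j) y) x = lin (\<lambda>j. lin (\<lambda>k. F k j) x) y"
  unfolding lin_def additive.sum[OF additive_zscale]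
  by (subst sum.swap) (simp add: zscale_commute)

lemma lin_tmap: "lin f (tmap p x) = lin (\<lambda>(w, e). f (p w, e)) x"
  unfolding tmap_def additive_lin_commute[OF additive_lin]
  by (rule lin_cong) auto

lemma lin_tn_self: "lin (\<lambda>(w, e). tn w e) x = (x :: 'w \<times> 'e \<Rightarrow>\<^sub>0 int)"
proof (rule poly_mapping_eqI)
  fix j :: "'w \<times> 'e"
  have lookup_additive: "additive (\<lambda>y. Poly_Mapping.lookup y j)"
    by standard (simp add: lookup_add)
  have "Poly_Mapping.lookup (lin (\<lambda>(w, e). tn w e) x) j = lin (\<lambda>k. (1 when k = j)) x"
    unfolding additive_lin_commute[OF lookup_additive]
    by (rule lin_cong) (auto simp: tn_def lookup_single)
  also have "\<dots> = (\<Sum>k\<in>Poly_Mapping.keys x \<union> {j}. zscale (Poly_Mapping.lookup x k) ((1::int) when k = j))"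
    by (rule lin_superset) auto
  also have "\<dots> = Poly_Mapping.lookup x j"
    by (subst sum.remove[of _ j]) (auto simp: when_def zscale_int_1)
  finally show "Poly_Mapping.lookup (lin (\<lambda>(w, e). tn w e) x) j = Poly_Mapping.lookup x j" .
qed


section \<open>Tensor products over A\<close>

lemma teq_refl [simp]: "teq r act x x"
  by (simp add: teq_def tens_null.zero)

lemma teq_sym: "teq r act x y \<Longrightarrow> teq r act y x"
  unfolding teq_def by (metis minus_diff_eq tens_null.neg)

lemma teq_trans [trans]:
  assumes "teq r act x y" "teq r act y z"
  shows "teq r act x z"
  using tens_null.add[OF assms[unfolded teq_def]] by (simp add: teq_def)

lemma teq_add: "teq r act x x' \<Longrightarrow> teq r act y y' \<Longrightarrow> teq r act (x + y) (x' + y')"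
  unfolding teq_def by (metis add_diff_add tens_null.add)

lemma teq_sum: "(\<And>i. i \<in> S \<Longrightarrow> teq r act (F i) (G i)) \<Longrightarrow> teq r act (\<Sum>i\<in>S. F i) (\<Sum>i\<in>S. G i)"
  by (induction S rule: infinite_finite_induct) (simp_all add: teq_add)

lemma teq_zscale: "teq r act x y \<Longrightarrow> teq r act (zscale n x) (zscale n y)"
  unfolding teq_def
proof (induction n rule: int_induct[where k = 0])
  case (step2 i)
  then have "(zscale i x - zscale i y) + - (x - y) \<in> tens_null r act"
    by (intro tens_null.add tens_null.neg)
  then show ?case by (simp add: zscale_minus_1 algebra_simps)
qed (simp_all add: zscale_plus_1 add_diff_add tens_null.zero tens_null.add)

lemma teq_lin: "(\<And>k. k \<in> Poly_Mapping.keys x \<Longrightarrow> teq r act (F k) (G k)) \<Longrightarrow> teq r act (lin F x) (lin G x)"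
  unfolding lin_def by (intro teq_sum teq_zscale)

lemma lin_tens_null:
  assumes "\<And>w w' e. f (w + w', e) = f (w, e) + f (w', e)"
    and "\<And>w e e'. f (w, e + e') = f (w, e) + f (w, e')"
    and "\<And>w a e. f (r w a, e) = f (w, act a e)"
    and "x \<in> tens_null r act"
  shows "lin f x = 0"
  using assms(4) by induction (simp_all add: lin.zero lin.add lin.minus lin.diff assms(1-3))

lemma lin_teq_cong:
  assumes "\<And>w w' e. f (w + w', e) = f (w, e) + f (w', e)"
    and "\<And>w e e'. f (w, e + e') = f (w, e) + f (w, e')"
    and "\<And>w a e. f (r w a, e) = f (w, act a e)"
    and "teq r act x y"
  shows "lin f x = lin f y"
  using lin_tens_null[OF assms(1-3), of "x - y"] assms(4) by (simp add: teq_def lin.diff)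

lemma tn_add_left: "teq r act (tn (w + w') e) (tn w e + tn w' e)"
  unfolding teq_def using tens_null.addl by (metis diff_diff_eq)

lemma tn_add_right: "teq r act (tn w (e + e')) (tn w e + tn w e')"
  unfolding teq_def using tens_null.addr by (metis diff_diff_eq)

lemma tn_balanced: "teq r act (tn (r w a) e) (tn w (act a e))"
  unfolding teq_def by (rule tens_null.bal)

lemma tn_zero_left: "teq r act (tn 0 e) 0"
  using tens_null.neg[OF tens_null.addl[of 0 0 e]] by (simp add: teq_def)

lemma tn_zero_right: "teq r act (tn w 0) 0"
  using tens_null.neg[OF tens_null.addr[of w 0 0]] by (simp add: teq_def)

lemma tn_diff_left: "teq r act (tn (w - w') e) (tn w e - tn w' e)"
  using tens_null.neg[OF tens_null.addl[of "w - w'" w' e]] by (simp add: teq_def algebra_simps)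

lemma tn_zscale_left: "teq r act (tn (zscale n w) e) (zscale n (tn w e))"
proof (induction n rule: int_induct[where k = 0])
  case base
  show ?case by (simp add: tn_zero_left)
next
  case (step1 i)
  have "teq r act (tn (zscale i w + w) e) (tn (zscale i w) e + tn w e)"
    by (rule tn_add_left)
  also have "teq r act \<dots> (zscale i (tn w e) + tn w e)"
    using step1.IH by (simp add: teq_add)
  finally show ?case by (simp add: zscale_plus_1)
next
  case (step2 i)
  have "teq r act (tn (zscale i w - w) e) (tn (zscale i w) e - tn w e)"
    by (rule tn_diff_left)
  also have "teq r act \<dots> (zscale i (tn w e) - tn w e)"
    using teq_add[OF step2.IH teq_refl, of "- tn w e"] by simp
  finally show ?case by (simp add: zscale_minus_1)
qed

lemma tn_sum_left: "teq r act (tn (\<Sum>i\<in>S. w i) e) (\<Sum>i\<in>S. tn (w i) e)"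
proof (induction S rule: infinite_finite_induct)
  case (insert i S)
  have "teq r act (tn (w i + sum w S) e) (tn (w i) e + tn (sum w S) e)"
    by (rule tn_add_left)
  also have "teq r act \<dots> (tn (w i) e + (\<Sum>i\<in>S. tn (w i) e))"
    using insert.IH by (simp add: teq_add)
  finally show ?case using insert.hyps by simp
qed (simp_all add: tn_zero_left)

lemma tn_sum_right: "teq r act (tn w (\<Sum>i\<in>S. e i)) (\<Sum>i\<in>S. tn w (e i))"
proof (induction S rule: infinite_finite_induct)
  case (insert i S)
  have "teq r act (tn w (e i + sum e S)) (tn w (e i) + tn w (sum e S))"
    by (rule tn_add_right)
  also have "teq r act \<dots> (tn w (e i) + (\<Sum>i\<in>S. tn w (e i)))"
    using insert.IH by (simp add: teq_add)
  finally show ?case using insert.hyps by simp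
qed (simp_all add: tn_zero_right)

lemma tn_lin_left: "teq r act (tn (lin F x) e) (lin (\<lambda>k. tn (F k) e) x)"
  unfolding lin_def
  using teq_trans[OF tn_sum_left teq_sum[OF tn_zscale_left]] .


lemma sum_unit_vectors:
  fixes v :: "nat \<Rightarrow> 'a::ring_1"
  assumes "\<And>i. n \<le> i \<Longrightarrow> v i = 0"
  shows "(\<lambda>j. \<Sum>i<n. v i * (if j = i then 1 else 0)) = v"
proof
  fix j
  have "(\<Sum>i<n. v i * (if j = i then 1 else 0)) = (\<Sum>i<n. if i = j then v i else 0)"
    by (rule sum.cong) auto
  then show "(\<Sum>i<n. v i * (if j = i then 1 else 0)) = v j"
    using assms[of j] by simp
qed

lemma fg_projective_dual_basis:
  fixes act :: "'a::ring_1 \<Rightarrow> 'e::ab_group_add \<Rightarrow> 'e"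
  assumes "fg_projective act"
  obtains n :: nat and b :: "nat \<Rightarrow> 'e" and coord :: "nat \<Rightarrow> 'e \<Rightarrow> 'a"
  where "\<And>g. (\<Sum>i<n. act (coord i g) (b i)) = g"
    and "\<And>i. additive (coord i)"
    and "\<And>i a g. coord i (act a g) = a * coord i g"
proof -
  obtain n \<iota> \<pi> where
    \<iota>_vanish: "\<And>e i. n \<le> i \<Longrightarrow> (\<iota>::'e \<Rightarrow> nat \<Rightarrow> 'a) e i = 0" and
    \<iota>_add: "\<And>e f. \<iota> (e + f) = (\<lambda>i. \<iota> e i + \<iota> f i)" and
    \<iota>_act: "\<And>a e. \<iota> (act a e) = (\<lambda>i. a * \<iota> e i)" and
    \<pi>_add: "\<And>v w. (\<forall>i\<ge>n. v i = 0) \<Longrightarrow> (\<forall>i\<ge>n. w i = 0) \<Longrightarrow> \<pi> (\<lambda>i. v i + w i) = \<pi> v + \<pi> w" and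
    \<pi>_act: "\<And>a v. (\<forall>i\<ge>n. v i = 0) \<Longrightarrow> \<pi> (\<lambda>i. a * v i) = act a (\<pi> v)" and
    \<pi>_\<iota>: "\<And>e. \<pi> (\<iota> e) = e"
    using assms unfolding fg_projective_def by blast
  define \<delta> :: "nat \<Rightarrow> nat \<Rightarrow> 'a" where "\<delta> i j = (if j = i then 1 else 0)" for i j
  have \<pi>_0: "\<pi> (\<lambda>j. 0) = 0"
    using \<pi>_add[of "\<lambda>j. 0" "\<lambda>j. 0"] by simp
  have \<pi>_sum: "\<pi> (\<lambda>j. \<Sum>i<m. c i * \<delta> i j) = (\<Sum>i<m. act (c i) (\<pi> (\<delta> i)))" if "m \<le> n" for m c
    using that
  proof (induction m)
    case (Suc m)
    have "\<pi> (\<lambda>j. (\<Sum>i<m. c i * \<delta> i j) + c m * \<delta> m j)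
        = \<pi> (\<lambda>j. \<Sum>i<m. c i * \<delta> i j) + \<pi> (\<lambda>j. c m * \<delta> m j)"
      by (rule \<pi>_add) (use Suc.prems in \<open>auto simp: \<delta>_def\<close>)
    moreover have "\<pi> (\<lambda>j. c m * \<delta> m j) = act (c m) (\<pi> (\<delta> m))"
      by (rule \<pi>_act) (use Suc.prems in \<open>auto simp: \<delta>_def\<close>)
    ultimately show ?case using Suc by simp
  qed (simp add: \<pi>_0)
  have "(\<lambda>j. \<Sum>i<n. \<iota> g i * \<delta> i j) = \<iota> g" for g
    unfolding \<delta>_def by (rule sum_unit_vectors) (rule \<iota>_vanish)
  then have "(\<Sum>i<n. act (\<iota> g i) (\<pi> (\<delta> i))) = g" for g
    using \<pi>_sum[of n "\<iota> g"] \<pi>_\<iota>[of g] by simp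
  moreover have "additive (\<lambda>g. \<iota> g i)" for i
    by standard (simp add: \<iota>_add)
  ultimately show thesis
    using that[where n = n and b = "\<lambda>i. \<pi> (\<delta> i)" and coord = "\<lambda>i g. \<iota> g i"]
    by (simp add: \<iota>_act)
qed

lemma teq_zero_if_contractions_vanish:
  fixes r :: "'w::ab_group_add \<Rightarrow> 'a::ring_1 \<Rightarrow> 'w" and act :: "'a \<Rightarrow> 'e::ab_group_add \<Rightarrow> 'e"
  assumes "fg_projective act"
    and vanish: "\<And>\<phi>. additive \<phi> \<Longrightarrow> (\<And>a e. \<phi> (act a e) = a * \<phi> e)
        \<Longrightarrow> lin (\<lambda>(w, g). r w (\<phi> g)) \<omega> = 0"
  shows "teq r act \<omega> 0"
proof -
  obtain n :: nat and b coord where expand: "\<And>g. (\<Sum>i<n. act (coord i g) (b i)) = g"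
    and coord_add: "\<And>i. additive (coord i)" and coord_act: "\<And>i a g. coord i (act a g) = a * coord i g"
    by (rule fg_projective_dual_basis[OF assms(1)]) (rule that)
  have expand_tn: "teq r act (tn w g) (\<Sum>i<n. tn (r w (coord i g)) (b i))" for w g
  proof -
    have "teq r act (tn w g) (\<Sum>i<n. tn w (act (coord i g) (b i)))"
      using tn_sum_right[of r act w "\<lambda>i. act (coord i g) (b i)" "{..<n}"] by (simp add: expand)
    also have "teq r act \<dots> (\<Sum>i<n. tn (r w (coord i g)) (b i))"
      by (intro teq_sum teq_sym[OF tn_balanced])
    finally show ?thesis .
  qed
  have "\<omega> = lin (\<lambda>(w, g). tn w g) \<omega>"
    by (simp add: lin_tn_self)
  also have "teq r act \<dots> (lin (\<lambda>(w, g). \<Sum>i<n. tn (r w (coord i g)) (b i)) \<omega>)"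
    by (rule teq_lin) (auto simp: expand_tn)
  also have "\<dots> = (\<Sum>i<n. lin (\<lambda>k. tn (case k of (w, g) \<Rightarrow> r w (coord i g)) (b i)) \<omega>)"
    by (simp add: lin_sum_fun[symmetric] case_prod_unfold)
  also have "teq r act \<dots> (\<Sum>i<n. tn (lin (\<lambda>(w, g). r w (coord i g)) \<omega>) (b i))"
    by (intro teq_sum teq_sym[OF tn_lin_left])
  also have "\<dots> = (\<Sum>i<n. tn 0 (b i))"
    using vanish[OF coord_add coord_act] by simp
  also have "teq r act \<dots> (\<Sum>i<n. 0)"
    by (intro teq_sum tn_zero_left)
  finally show ?thesis by simp
qed


section \<open>Integrable star calculi\<close>

locale integrable_calculus =
  fixes C :: "('a::ring_1, 'w1::ab_group_add, 'w2::ab_group_add) calc"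
  assumes ac_star_calculus: "ac_star_calculus C"
begin

lemma star_calculus: "star_calculus C"
  using ac_star_calculus by (simp add: ac_star_calculus_def)

lemma almost_complex: "almost_complex C"
  using ac_star_calculus by (simp add: ac_star_calculus_def)

lemma integrable: "integrable C"
  using ac_star_calculus by (simp add: ac_star_calculus_def)

lemma bimod1: "bimod (lact1 C) (ract1 C)"
  using star_calculus by (simp add: star_calculus_def)

lemma bimod2: "bimod (lact2 C) (ract2 C)"
  using star_calculus by (simp add: star_calculus_def)

lemma ract1_add: "ract1 C (w + w') a = ract1 C w a + ract1 C w' a"
  using bimod1 by (simp add: bimod_def)
lemma ract1_add_right: "ract1 C w (a + b) = ract1 C w a + ract1 C w b"
  using bimod1 by (simp add: bimod_def)
lemma ract1_ract1: "ract1 C (ract1 C w a) b = ract1 C w (a * b)"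
  using bimod1 by (simp add: bimod_def)
lemma lact1_add: "lact1 C a (w + w') = lact1 C a w + lact1 C a w'"
  using bimod1 by (simp add: bimod_def)
lemma lact1_ract1: "lact1 C a (ract1 C w b) = ract1 C (lact1 C a w) b"
  using bimod1 by (simp add: bimod_def)
lemma ract2_add: "ract2 C (w + w') a = ract2 C w a + ract2 C w' a"
  using bimod2 by (simp add: bimod_def)
lemma ract2_add_right: "ract2 C w (a + b) = ract2 C w a + ract2 C w b"
  using bimod2 by (simp add: bimod_def)
lemma ract2_ract2: "ract2 C (ract2 C w a) b = ract2 C w (a * b)"
  using bimod2 by (simp add: bimod_def)

lemma ract2_diff: "ract2 C (w - w') a = ract2 C w a - ract2 C w' a"
  by (rule additive.diff) (standard, rule ract2_add)

lemma wedge_add_left: "wedge C (x + y) z = wedge C x z + wedge C y z"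
  using star_calculus by (simp add: star_calculus_def)
lemma wedge_add_right: "wedge C x (y + z) = wedge C x y + wedge C x z"
  using star_calculus by (simp add: star_calculus_def)
lemma wedge_ract1_left: "wedge C (ract1 C x a) y = wedge C x (lact1 C a y)"
  using star_calculus by (simp add: star_calculus_def)
lemma wedge_ract1_right: "wedge C x (ract1 C y a) = ract2 C (wedge C x y) a"
  using star_calculus by (simp add: star_calculus_def)
lemma d1_add: "d1 C (x + y) = d1 C x + d1 C y"
  using star_calculus by (simp add: star_calculus_def)
lemma d1_ract1: "d1 C (ract1 C x a) = ract2 C (d1 C x) a - wedge C x (d0 C a)"
  using star_calculus by (simp add: star_calculus_def)
lemma d1_d0: "d1 C (d0 C a) = 0"
  using star_calculus by (simp add: star_calculus_def)
lemma d1_star1: "d1 C (star1 C x) = star2 C (d1 C x)"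
  using star_calculus by (simp add: star_calculus_def)
lemma star1_add: "star1 C (x + y) = star1 C x + star1 C y"
  using star_calculus by (simp add: star_calculus_def)
lemma star1_star1: "star1 C (star1 C x) = x"
  using star_calculus by (simp add: star_calculus_def)
lemma star1_lact1: "star1 C (lact1 C a x) = ract1 C (star1 C x) (starA C a)"
  using star_calculus by (simp add: star_calculus_def)
lemma star1_ract1: "star1 C (ract1 C x a) = lact1 C (starA C a) (star1 C x)"
  using star_calculus by (simp add: star_calculus_def)
lemma star2_add: "star2 C (x + y) = star2 C x + star2 C y"
  using star_calculus by (simp add: star_calculus_def)
lemma star2_wedge: "star2 C (wedge C x y) = - wedge C (star1 C y) (star1 C x)"
  using star_calculus by (simp add: star_calculus_def)

lemma p01_bimod_map: "bimod_map (lact1 C) (ract1 C) (p01 C)"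
  using almost_complex by (simp add: almost_complex_def)
lemma p11_bimod_map: "bimod_map (lact2 C) (ract2 C) (p11 C)"
  using almost_complex by (simp add: almost_complex_def)
lemma p20_bimod_map: "bimod_map (lact2 C) (ract2 C) (p20 C)"
  using almost_complex by (simp add: almost_complex_def)
lemma p02_bimod_map: "bimod_map (lact2 C) (ract2 C) (p02 C)"
  using almost_complex by (simp add: almost_complex_def)

lemma p01_ract1: "p01 C (ract1 C x a) = ract1 C (p01 C x) a"
  using p01_bimod_map by (simp add: bimod_map_def)
lemma p20_ract2: "p20 C (ract2 C x a) = ract2 C (p20 C x) a"
  using p20_bimod_map by (simp add: bimod_map_def)
lemma p02_ract2: "p02 C (ract2 C x a) = ract2 C (p02 C x) a"
  using p02_bimod_map by (simp add: bimod_map_def)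

lemma p10_plus_p01: "p10 C x + p01 C x = x"
  using almost_complex by (simp add: almost_complex_def)
lemma p01_p01: "p01 C (p01 C x) = p01 C x"
  using almost_complex by (simp add: almost_complex_def)
lemma p10_p01: "p10 C (p01 C x) = 0"
  using almost_complex by (simp add: almost_complex_def)
lemma p02_p20: "p02 C (p20 C w) = 0"
  using almost_complex by (simp add: almost_complex_def)
lemma p02_p11: "p02 C (p11 C w) = 0"
  using almost_complex by (simp add: almost_complex_def)
lemma star2_p02: "star2 C (p02 C w) = p20 C (star2 C w)"
  using almost_complex by (simp add: almost_complex_def)
lemma wedge_bidegree:
  "p20 C (wedge C (p10 C x) (p10 C y)) = wedge C (p10 C x) (p10 C y)"
  "p11 C (wedge C (p10 C x) (p01 C y)) = wedge C (p10 C x) (p01 C y)"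
  "p11 C (wedge C (p01 C x) (p10 C y)) = wedge C (p01 C x) (p10 C y)"
  "p02 C (wedge C (p01 C x) (p01 C y)) = wedge C (p01 C x) (p01 C y)"
  using almost_complex by (simp_all add: almost_complex_def)

lemma p02_d1_p10: "p02 C (d1 C (p10 C x)) = 0"
  using integrable by (simp add: integrable_def)

sublocale p01: additive "p01 C"
  by standard (use p01_bimod_map in \<open>simp add: bimod_map_def\<close>)
sublocale p11: additive "p11 C"
  by standard (use p11_bimod_map in \<open>simp add: bimod_map_def\<close>)
sublocale p20: additive "p20 C"
  by standard (use p20_bimod_map in \<open>simp add: bimod_map_def\<close>)
sublocale p02: additive "p02 C"
  by standard (use p02_bimod_map in \<open>simp add: bimod_map_def\<close>)
sublocale d1: additive "d1 C"
  by standard (rule d1_add)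
sublocale star1: additive "star1 C"
  by standard (rule star1_add)
sublocale star2: additive "star2 C"
  by standard (rule star2_add)
sublocale wedge: additive "wedge C x" for x
  by standard (rule wedge_add_right)

lemma p02_wedge: "p02 C (wedge C x y) = wedge C (p01 C x) (p01 C y)"
proof -
  have "p02 C (wedge C x y) = p02 C (wedge C (p10 C x + p01 C x) (p10 C y + p01 C y))"
    by (simp add: p10_plus_p01)
  also have "\<dots> = p02 C (p20 C (wedge C (p10 C x) (p10 C y)))
      + p02 C (p11 C (wedge C (p10 C x) (p01 C y)))
      + p02 C (p11 C (wedge C (p01 C x) (p10 C y)))
      + p02 C (wedge C (p01 C x) (p01 C y))"
    by (simp add: wedge_add_left wedge.add p02.add wedge_bidegree add.assoc)
  also have "\<dots> = wedge C (p01 C x) (p01 C y)"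
    by (simp only: p02_p20 p02_p11 wedge_bidegree(4) add_0_left)
  finally show ?thesis .
qed

lemma p02_d1: "p02 C (d1 C x) = p02 C (d1 C (p01 C x))"
  using arg_cong[OF p10_plus_p01[of x], of "\<lambda>y. p02 C (d1 C y)"]
  by (simp add: d1.add p02.add p02_d1_p10)

lemma dbar1_of_01: "p01 C x = x \<Longrightarrow> dbar1 C x = p02 C (d1 C x)"
  unfolding dbar1_def by (metis p10_p01 d1.zero p11.zero add_0)

end


section \<open>Hermitian modules\<close>

locale hermitian_module = integrable_calculus C
  for C :: "('a::ring_1, 'w1::ab_group_add, 'w2::ab_group_add) calc" +
  fixes act :: "'a \<Rightarrow> 'e::ab_group_add \<Rightarrow> 'e"
    and h :: "'e \<Rightarrow> 'e \<Rightarrow> 'a"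
  assumes fg_projective: "fg_projective act"
    and nondeg_hermitian: "nondeg_hermitian C act h"
begin

lemma h_add_left: "h (e + e') f = h e f + h e' f"
  using nondeg_hermitian by (simp add: nondeg_hermitian_def)
lemma h_act_left: "h (act a e) f = a * h e f"
  using nondeg_hermitian by (simp add: nondeg_hermitian_def)
lemma starA_h: "starA C (h e f) = h f e"
  using nondeg_hermitian by (simp add: nondeg_hermitian_def)
lemma h_represents:
  assumes "additive \<phi>" "\<And>a e. \<phi> (act a e) = a * \<phi> e"
  obtains f where "\<And>e. \<phi> e = h e f"
  using nondeg_hermitian assms unfolding nondeg_hermitian_def additive_def by metis

definition pair1 :: "'e \<Rightarrow> ('w1 \<times> 'e \<Rightarrow>\<^sub>0 int) \<Rightarrow> 'w1" where
  "pair1 f \<omega> = lin (\<lambda>(w, g). ract1 C w (h g f)) \<omega>"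

definition pair2 :: "'e \<Rightarrow> ('w2 \<times> 'e \<Rightarrow>\<^sub>0 int) \<Rightarrow> 'w2" where
  "pair2 f \<omega> = lin (\<lambda>(w, g). ract2 C w (h g f)) \<omega>"

lemma pair1_tn [simp]: "pair1 f (tn w g) = ract1 C w (h g f)"
  by (simp add: pair1_def)

lemma pair2_tn [simp]: "pair2 f (tn w g) = ract2 C w (h g f)"
  by (simp add: pair2_def)

sublocale pair1: additive "pair1 f" for f
  unfolding pair1_def by (rule additive_lin)
sublocale pair2: additive "pair2 f" for f
  unfolding pair2_def by (rule additive_lin)

lemma pair1_teq_cong: "teq (ract1 C) act x y \<Longrightarrow> pair1 f x = pair1 f y"
  unfolding pair1_def
  by (rule lin_teq_cong) (auto simp: ract1_add ract1_add_right h_add_left ract1_ract1 h_act_left)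

lemma pair2_teq_cong: "teq (ract2 C) act x y \<Longrightarrow> pair2 f x = pair2 f y"
  unfolding pair2_def
  by (rule lin_teq_cong) (auto simp: ract2_add ract2_add_right h_add_left ract2_ract2 h_act_left)

lemma pair2_lin: "pair2 f (lin G x) = lin (\<lambda>k. pair2 f (G k)) x"
  by (rule additive_lin_commute) unfold_locales

lemma pair1_tmap:
  assumes "additive p" "\<And>w a. p (ract1 C w a) = ract1 C (p w) a"
  shows "pair1 f (tmap p z) = p (pair1 f z)"
  unfolding pair1_def lin_tmap additive_lin_commute[OF assms(1)]
  by (rule lin_cong) (auto simp: assms(2))

lemma pair2_tmap:
  assumes "additive p" "\<And>w a. p (ract2 C w a) = ract2 C (p w) a"
  shows "pair2 f (tmap p z) = p (pair2 f z)"
  unfolding pair2_def lin_tmap additive_lin_commute[OF assms(1)]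
  by (rule lin_cong) (auto simp: assms(2))

lemma pair2_twedge: "pair2 f (twedge C x z) = wedge C x (pair1 f z)"
  unfolding pair2_def pair1_def twedge_def lin_tmap additive_lin_commute[OF wedge.additive_axioms]
  by (rule lin_cong) (auto simp: wedge_ract1_right)

lemma pair1_tlact: "pair1 f (tlact C a z) = lact1 C a (pair1 f z)"
  unfolding tlact_def by (rule pair1_tmap) (unfold_locales, auto simp: lact1_add lact1_ract1)

lemma teq_zero_iff_pair2_vanish: "teq (ract2 C) act \<omega> 0 \<longleftrightarrow> (\<forall>f. pair2 f \<omega> = 0)"
proof
  show "teq (ract2 C) act \<omega> 0 \<Longrightarrow> \<forall>f. pair2 f \<omega> = 0"
    using pair2_teq_cong pair2.zero by metis
  assume vanish: "\<forall>f. pair2 f \<omega> = 0"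
  show "teq (ract2 C) act \<omega> 0"
  proof (rule teq_zero_if_contractions_vanish[OF fg_projective])
    fix \<phi> :: "'e \<Rightarrow> 'a"
    assume "additive \<phi>" "\<And>a e. \<phi> (act a e) = a * \<phi> e"
    then obtain f where "\<And>e. \<phi> e = h e f"
      by (rule h_represents) (rule that)
    with vanish show "lin (\<lambda>(w, g). ract2 C w (\<phi> g)) \<omega> = 0"
      by (simp add: pair2_def)
  qed
qed

end


section \<open>The curvature of the Chern connection\<close>

locale chern_module = hermitian_module C act h
  for C :: "('a::ring_1, 'w1::ab_group_add, 'w2::ab_group_add) calc"
    and act :: "'a \<Rightarrow> 'e::ab_group_add \<Rightarrow> 'e"
    and h :: "'e \<Rightarrow> 'e \<Rightarrow> 'a" +
  fixes dbE nab :: "'e \<Rightarrow> ('w1 \<times> 'e \<Rightarrow>\<^sub>0 int)"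
  assumes holomorphic_structure: "holomorphic_structure C act dbE"
    and chern_connection: "chern_connection C act h dbE nab"
begin

lemma dbE_keys_01: "k \<in> Poly_Mapping.keys (dbE e) \<Longrightarrow> p01 C (fst k) = fst k"
  using holomorphic_structure by (simp add: holomorphic_structure_def)
lemma dbE_add: "teq (ract1 C) act (dbE (e + f)) (dbE e + dbE f)"
  using holomorphic_structure by (simp add: holomorphic_structure_def)
lemma dbE_act: "teq (ract1 C) act (dbE (act a e)) (tn (dbar0 C a) e + tlact C a (dbE e))"
  using holomorphic_structure by (simp add: holomorphic_structure_def)
lemma dbE_square: "teq (ract2 C) act (lin (\<lambda>(x, f). tn (dbar1 C x) f - twedge C x (dbE f)) (dbE e)) 0"
  using holomorphic_structure by (simp add: holomorphic_structure_def)
lemma nab_01: "teq (ract1 C) act (tmap (p01 C) (nab e)) (dbE e)"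
  using chern_connection by (simp add: chern_connection_def)

lemma d0_h_metric: "d0 C (h g f) = pair1 f (nab g) + star1 C (pair1 g (nab f))"
proof -
  have "star1 C (pair1 g (nab f)) = lin (\<lambda>(x, k). lact1 C (h g k) (star1 C x)) (nab f)"
    unfolding pair1_def additive_lin_commute[OF star1.additive_axioms]
    by (rule lin_cong) (auto simp: star1_ract1 starA_h)
  with chern_connection show ?thesis
    by (simp add: chern_connection_def preserves_metric_def pair1_def)
qed

lemma pair1_dbE_add: "pair1 f (dbE (g + g')) = pair1 f (dbE g) + pair1 f (dbE g')"
  using pair1_teq_cong[OF dbE_add] by (simp add: pair1.add)

lemma pair1_dbE_act: "pair1 f (dbE (act a g)) = ract1 C (dbar0 C a) (h g f) + lact1 C a (pair1 f (dbE g))"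
  using pair1_teq_cong[OF dbE_act] by (simp add: pair1.add pair1_tlact)

lemma p01_pair1_nab: "p01 C (pair1 f (nab g)) = pair1 f (dbE g)"
  using pair1_teq_cong[OF nab_01] pair1_tmap[OF p01.additive_axioms p01_ract1] by simp

lemma pair2_curvature:
  "pair2 f (curvature C nab e)
    = lin (\<lambda>(x, g). ract2 C (d1 C x) (h g f) - wedge C x (pair1 f (nab g))) (nab e)"
  unfolding curvature_def pair2_lin
  by (rule lin_cong) (auto simp: pair2.diff pair2_twedge)

text \<open>The contraction with \<open>f\<close> of \<open>(dbar1 \<otimes> id - id \<and> dbE)(x \<otimes> g)\<close>; on \<open>(0,1)\<close>-forms it is
  biadditive and balanced, hence defined on \<open>\<Omega>\<^sup>0\<^sup>,\<^sup>1 \<otimes>\<^sub>A E\<close>.\<close>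

definition dbar_curv_pair :: "'e \<Rightarrow> 'w1 \<Rightarrow> 'e \<Rightarrow> 'w2" where
  "dbar_curv_pair f x g = ract2 C (p02 C (d1 C x)) (h g f) - wedge C x (pair1 f (dbE g))"

lemma dbar_curv_pair_add_left:
  "dbar_curv_pair f (p01 C (x + x')) g = dbar_curv_pair f (p01 C x) g + dbar_curv_pair f (p01 C x') g"
  unfolding dbar_curv_pair_def by (simp add: p01.add d1.add p02.add ract2_add wedge_add_left)

lemma dbar_curv_pair_add_right:
  "dbar_curv_pair f (p01 C x) (g + g') = dbar_curv_pair f (p01 C x) g + dbar_curv_pair f (p01 C x) g'"
  unfolding dbar_curv_pair_def by (simp add: h_add_left ract2_add_right pair1_dbE_add wedge.add)

lemma dbar_curv_pair_balanced:
  "dbar_curv_pair f (p01 C (ract1 C x a)) g = dbar_curv_pair f (p01 C x) (act a g)"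
proof -
  have dbar_ract1: "p02 C (d1 C (ract1 C (p01 C x) a))
      = ract2 C (p02 C (d1 C (p01 C x))) a - wedge C (p01 C x) (dbar0 C a)"
    by (simp add: d1_ract1 p02.diff p02_ract2 p02_wedge p01_p01 dbar0_def)
  show ?thesis
    unfolding dbar_curv_pair_def p01_ract1 dbar_ract1
    by (simp add: ract2_add ract2_diff ract2_ract2 h_act_left pair1_dbE_act wedge.add wedge.diff
        wedge_ract1_left wedge_ract1_right algebra_simps)
qed

lemma p02_pair2_curvature: "p02 C (pair2 f (curvature C nab e)) = 0"
proof -
  let ?D = "\<lambda>(x, g). dbar_curv_pair f (p01 C x) g"
  have "p02 C (pair2 f (curvature C nab e)) = lin ?D (nab e)"
    unfolding pair2_curvature additive_lin_commute[OF p02.additive_axioms]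
    by (rule lin_cong) (auto simp: dbar_curv_pair_def p02.diff p02_ract2 p02_wedge p01_p01
        p01_pair1_nab simp flip: p02_d1)
  also have "\<dots> = lin ?D (tmap (p01 C) (nab e))"
    unfolding lin_tmap by (rule lin_cong) (auto simp: p01_p01)
  also have "\<dots> = lin ?D (dbE e)"
    by (rule lin_teq_cong[OF _ _ _ nab_01])
      (auto simp: dbar_curv_pair_add_left dbar_curv_pair_add_right dbar_curv_pair_balanced)
  also have "\<dots> = pair2 f (lin (\<lambda>(x, f). tn (dbar1 C x) f - twedge C x (dbE f)) (dbE e))"
    unfolding pair2_lin
    by (rule lin_cong) (auto dest: dbE_keys_01 simp: dbar_curv_pair_def pair2.diff pair2_twedge
        dbar1_of_01)
  also have "\<dots> = 0"
    using pair2_teq_cong[OF dbE_square] by (simp add: pair2.zero)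
  finally show ?thesis .
qed

definition connection_wedge :: "'e \<Rightarrow> 'e \<Rightarrow> 'w2" where
  "connection_wedge e f = lin (\<lambda>(x, g). wedge C x (star1 C (pair1 g (nab f)))) (nab e)"

lemma pair2_curvature_metric:
  "pair2 f (curvature C nab e) = - d1 C (star1 C (pair1 e (nab f))) + connection_wedge e f"
proof -
  have "pair2 f (curvature C nab e)
      = lin (\<lambda>(x, g). d1 C (ract1 C x (h g f)) + wedge C x (star1 C (pair1 g (nab f)))) (nab e)"
    unfolding pair2_curvature
    by (rule lin_cong) (auto simp: d0_h_metric wedge.add d1_ract1)
  also have "\<dots> = d1 C (pair1 f (nab e)) + connection_wedge e f"
    unfolding pair1_def connection_wedge_def additive_lin_commute[OF d1.additive_axioms]
    by (simp add: lin_add_fun[symmetric] case_prod_unfold)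
  also have "d1 C (pair1 f (nab e)) = - d1 C (star1 C (pair1 e (nab f)))"
    using arg_cong[OF d0_h_metric[of e f], of "d1 C"] by (simp add: d1_d0 d1.add eq_neg_iff_add_eq_0)
  finally show ?thesis .
qed

lemma d1_star1_pair1_skew:
  "d1 C (star1 C (pair1 e (nab f))) = - star2 C (d1 C (star1 C (pair1 f (nab e))))"
proof -
  have "pair1 e (nab f) = d0 C (h f e) - star1 C (pair1 f (nab e))"
    by (simp add: d0_h_metric)
  then show ?thesis
    by (simp add: d1_star1 d1.diff d1_d0 star2.minus)
qed

lemma star2_connection_wedge: "star2 C (connection_wedge f e) = - connection_wedge e f"
proof -
  define W where "W = (\<lambda>(x, g) (y, k). wedge C x (lact1 C (h g k) (star1 C y)))"
  have double_sum: "connection_wedge e f = lin (\<lambda>a. lin (\<lambda>b. W a b) (nab f)) (nab e)" for e f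
    unfolding connection_wedge_def pair1_def W_def additive_lin_commute[OF star1.additive_axioms]
      additive_lin_commute[OF wedge.additive_axioms]
    by (intro lin_cong) (auto intro!: lin_cong simp: star1_ract1 starA_h)
  have "star2 C (W b a) = - W a b" for a b
    by (auto simp: W_def star2_wedge star1_lact1 star1_star1 starA_h wedge_ract1_left
        split: prod.split)
  then show ?thesis
    unfolding double_sum additive_lin_commute[OF star2.additive_axioms]
    by (simp add: lin_minus_fun lin_swap[of "\<lambda>b a. W a b"])
qed

lemma pair2_curvature_skew:
  "pair2 f (curvature C nab e) = - star2 C (pair2 e (curvature C nab f))"
  by (simp add: pair2_curvature_metric star2.add star2.minus star2.diff star2_connection_wedge
      d1_star1_pair1_skew[of e f])

lemma p20_pair2_curvature: "p20 C (pair2 f (curvature C nab e)) = 0"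
  by (subst pair2_curvature_skew)
    (simp add: p20.minus star2_p02[symmetric] p02_pair2_curvature star2.zero)

end

theorem mainTheorem13:
  fixes C :: "('a::ring_1, 'w1::ab_group_add, 'w2::ab_group_add) calc"
    and act :: "'a \<Rightarrow> 'e::ab_group_add \<Rightarrow> 'e"
    and h :: "'e \<Rightarrow> 'e \<Rightarrow> 'a"
    and dbE nab :: "'e \<Rightarrow> ('w1 \<times> 'e \<Rightarrow>\<^sub>0 int)"
  assumes "ac_star_calculus C"
    and "left_module act"
    and "fg_projective act"
    and "holomorphic_structure C act dbE"
    and "nondeg_hermitian C act h"
    and "chern_connection C act h dbE nab"
  shows "\<forall>e. teq (ract2 C) act (tmap (p02 C) (curvature C nab e)) 0 \<and>
             teq (ract2 C) act (tmap (p20 C) (curvature C nab e)) 0"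
proof -
  interpret chern_module C act h dbE nab
    using assms by unfold_locales
  show ?thesis
    by (simp add: teq_zero_iff_pair2_vanish pair2_tmap p02.additive_axioms p20.additive_axioms
        p02_ract2 p20_ract2 p02_pair2_curvature p20_pair2_curvature)
qed

end
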